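(* Let $R$ be a ranking profile over $m$ candidates and $\rhd$ a ranking that is pair-priceable for $R$. Then $\rhd$ satisfies strong proportional justified representation (sPJR) for $R$, i.e., for every subprofile $S$ of $R$, $$\Big|A(\rhd)\cap\bigcup_{\succ\in\mathcal{R}:S(\succ)>0}A(\succ)\Big|\geq\Big\lfloor|S|\binom{m}{2}\Big\rfloor.$$
   Context: Let $C$ be a set of $m$ candidates. A ranking is a strict linear order over $C$; $\mathcal{R}$ denotes the set of all rankings over $C$. A ranking profile is a function $R:\mathcal{R}\to[0,1]$ with $\sum_\succ R(\succ)=1$; a subprofile of $R$ is $S:\mathcal{R}\to[0,1]$ with $S(\succ)\leq R(\succ)$ for all $\succ$, and $|S|=\sum_\succ S(\succ)$. For a ranking $\succ$, $A(\succ)=\{(x,y)\in C\times C: x\succ y\}$. For $x\in X\subseteq C$, $u(\succ,x,X)=|\{y\in X\setminus\{x\}:x\succ y\}|$. A ranking $\rhd=x_1,\dots,x_m$ is pair-priceable for $R$ if there is $\pi:\mathcal{R}\times A(\rhd)\to[0,1]$ such that (1) $\pi(\succ,(x_i,x_j))\leq u(\succ,x_i,\{x_i,x_j\})$ for all $\succ$ and $(x_i,x_j)\in A(\rhd)$; (2) $\sum_{(x_i,x_j)\in A(\rhd)}\pi(\succ,(x_i,x_j))\leq\binom{m}{2}R(\succ)$ for all $\succ$; (3) $\sum_\succ\pi(\succ,(x_i,x_j))\leq1$ for all $(x_i,x_j)\in A(\rhd)$; (4) $\sum_\succ\sum_{(x_i,x_j)\in A(\rhd)}\pi(\succ,(x_i,x_j))>\binom{m}{2}-1$.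 *)

theory Defs
  imports Complex_Main
begin

text \<open>A ranking over the candidate set C is a strict linear order on C, represented as
  the relation r (a set of pairs) with (x,y) in r meaning x is ranked above y.
  The set A(r) of the paper is therefore the relation r itself.\<close>

definition rankings :: "'a set \<Rightarrow> 'a rel set" where
  "rankings C = {r. r \<subseteq> C \<times> C \<and> strict_linear_order_on C r}"

definition u :: "'a rel \<Rightarrow> 'a \<Rightarrow> 'a set \<Rightarrow> nat" where
  "u r x X = card {y \<in> X - {x}. (x, y) \<in> r}"

definition ranking_profile :: "'a set \<Rightarrow> ('a rel \<Rightarrow> real) \<Rightarrow> bool" where
  "ranking_profile C R \<longleftrightarrow>
     (\<forall>r \<in> rankings C. 0 \<le> R r \<and> R r \<le> 1) \<and> (\<Sum>r \<in> rankings C. R r) = 1"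

definition subprofile :: "'a set \<Rightarrow> ('a rel \<Rightarrow> real) \<Rightarrow> ('a rel \<Rightarrow> real) \<Rightarrow> bool" where
  "subprofile C S R \<longleftrightarrow> (\<forall>r \<in> rankings C. 0 \<le> S r \<and> S r \<le> 1 \<and> S r \<le> R r)"

definition profile_size :: "'a set \<Rightarrow> ('a rel \<Rightarrow> real) \<Rightarrow> real" where
  "profile_size C S = (\<Sum>r \<in> rankings C. S r)"

definition pair_priceable :: "'a set \<Rightarrow> ('a rel \<Rightarrow> real) \<Rightarrow> 'a rel \<Rightarrow> bool" where
  "pair_priceable C R T \<longleftrightarrow> T \<in> rankings C \<and>
     (\<exists>\<pi> :: 'a rel \<Rightarrow> ('a \<times> 'a) \<Rightarrow> real.
        (\<forall>r \<in> rankings C. \<forall>p \<in> T. 0 \<le> \<pi> r p \<and> \<pi> r p \<le> 1) \<and>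
        (\<forall>r \<in> rankings C. \<forall>(x, y) \<in> T. \<pi> r (x, y) \<le> real (u r x {x, y})) \<and>
        (\<forall>r \<in> rankings C. (\<Sum>p \<in> T. \<pi> r p) \<le> real (card C choose 2) * R r) \<and>
        (\<forall>p \<in> T. (\<Sum>r \<in> rankings C. \<pi> r p) \<le> 1) \<and>
        (\<Sum>r \<in> rankings C. \<Sum>p \<in> T. \<pi> r p) > real (card C choose 2) - 1)"

definition sPJR :: "'a set \<Rightarrow> ('a rel \<Rightarrow> real) \<Rightarrow> 'a rel \<Rightarrow> bool" where
  "sPJR C R T \<longleftrightarrow> (\<forall>S. subprofile C S R \<longrightarrow>
     int (card (T \<inter> \<Union>{r \<in> rankings C. S r > 0}))
       \<ge> \<lfloor>profile_size C S * real (card C choose 2)\<rfloor>)"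

end

theory Submission
  imports Defs
begin

text \<open>Let Q be the support of S. A pair of T that no ranking in Q agrees with is paid
  nothing by Q, because u r x {x, y} = 0 when x is not above y in r. Every pair is paid at
  most 1, so the pairs agreed with by Q receive at most their number, and all remaining
  payment comes from budgets outside Q, which total at most binom(m,2) (1 - |S|).
  Since the total payment exceeds binom(m,2) - 1, more than |S| binom(m,2) - 1 pairs of T
  are agreed with by Q.\<close>

definition profile_support :: "'a set \<Rightarrow> ('a rel \<Rightarrow> real) \<Rightarrow> 'a rel set" where
  "profile_support C S = {r \<in> rankings C. 0 < S r}"

lemma finite_rankings: "finite C \<Longrightarrow> finite (rankings C)"
  by (rule finite_subset[of _ "Pow (C \<times> C)"]) (auto simp: rankings_def)

lemma finite_ranking: "finite C \<Longrightarrow> r \<in> rankings C \<Longrightarrow> finite r"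
  by (auto simp: rankings_def intro: finite_subset)

lemma u_pair_eq_0: "(x, y) \<notin> r \<Longrightarrow> u r x {x, y} = 0"
  by (auto simp: u_def)

lemma profile_size_eq_sum_support:
  assumes "finite C" and "subprofile C S R"
  shows "profile_size C S = (\<Sum>r \<in> profile_support C S. S r)"
proof -
  have "S r = 0" if "r \<in> rankings C - profile_support C S" for r
  proof -
    have "0 \<le> S r" and "\<not> 0 < S r"
      using that assms(2) by (auto simp: subprofile_def profile_support_def)
    then show ?thesis by simp
  qed
  then show ?thesis
    unfolding profile_size_def profile_support_def
    by (intro sum.mono_neutral_right finite_rankings assms(1)) auto
qed

lemma mass_outside_support_le:
  assumes "finite C" and "ranking_profile C R" and "subprofile C S R"
  shows "(\<Sum>r \<in> rankings C - profile_support C S. R r) \<le> 1 - profile_size C S"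
proof -
  have sub: "profile_support C S \<subseteq> rankings C"
    by (auto simp: profile_support_def)
  have "profile_size C S \<le> (\<Sum>r \<in> profile_support C S. R r)"
    unfolding profile_size_eq_sum_support[OF assms(1,3)]
    using assms(3) sub by (intro sum_mono) (auto simp: subprofile_def)
  moreover have "(\<Sum>r \<in> rankings C - profile_support C S. R r)
      = (\<Sum>r \<in> rankings C. R r) - (\<Sum>r \<in> profile_support C S. R r)"
    using finite_rankings[OF assms(1)] sub by (rule sum_diff)
  ultimately show ?thesis
    using assms(2) by (simp add: ranking_profile_def)
qed

lemma total_payment_le_card_plus_outside:
  fixes \<pi> :: "'v \<Rightarrow> 'e \<Rightarrow> real"
  assumes "finite V" and "finite E" and "W \<subseteq> V" and "P \<subseteq> E"
    and nonneg: "\<And>r p. r \<in> V \<Longrightarrow> p \<in> E \<Longrightarrow> 0 \<le> \<pi> r p"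
    and cap: "\<And>p. p \<in> E \<Longrightarrow> (\<Sum>r \<in> V. \<pi> r p) \<le> 1"
    and zero: "\<And>r p. r \<in> W \<Longrightarrow> p \<in> E - P \<Longrightarrow> \<pi> r p = 0"
  shows "(\<Sum>r \<in> V. \<Sum>p \<in> E. \<pi> r p) \<le> card P + (\<Sum>r \<in> V - W. \<Sum>p \<in> E. \<pi> r p)"
proof -
  have outside: "(\<Sum>r \<in> V. \<pi> r p) = (\<Sum>r \<in> V - W. \<pi> r p)" if "p \<in> E - P" for p
    using that zero \<open>finite V\<close> by (intro sum.mono_neutral_right) auto
  have "(\<Sum>r \<in> V. \<Sum>p \<in> E. \<pi> r p) = (\<Sum>p \<in> E. \<Sum>r \<in> V. \<pi> r p)"
    by (rule sum.swap)
  also have "\<dots> = (\<Sum>p \<in> P. \<Sum>r \<in> V. \<pi> r p) + (\<Sum>p \<in> E - P. \<Sum>r \<in> V - W. \<pi> r p)"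
    using \<open>finite E\<close> \<open>P \<subseteq> E\<close> outside by (simp add: sum.subset_diff[of P E])
  also have "(\<Sum>p \<in> P. \<Sum>r \<in> V. \<pi> r p) \<le> (\<Sum>p \<in> P. 1)"
    using cap \<open>P \<subseteq> E\<close> by (intro sum_mono) auto
  also have "(\<Sum>p \<in> E - P. \<Sum>r \<in> V - W. \<pi> r p) \<le> (\<Sum>p \<in> E. \<Sum>r \<in> V - W. \<pi> r p)"
    using \<open>finite E\<close> nonneg by (intro sum_mono2 sum_nonneg) auto
  also have "\<dots> = (\<Sum>r \<in> V - W. \<Sum>p \<in> E. \<pi> r p)"
    by (rule sum.swap)
  finally show ?thesis by simp
qed

lemma pair_priceable_card_agreed_pairs_gt:
  assumes "finite C" and "pair_priceable C R T" and Q: "Q \<subseteq> rankings C"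
  shows "real (card C choose 2) * (1 - (\<Sum>r \<in> rankings C - Q. R r)) - 1
    < card (T \<inter> \<Union>Q)"
proof -
  define N where "N = real (card C choose 2)"
  define P where "P = T \<inter> \<Union>Q"
  obtain \<pi> where nonneg: "\<forall>r \<in> rankings C. \<forall>p \<in> T. 0 \<le> \<pi> r p \<and> \<pi> r p \<le> 1"
    and utility: "\<forall>r \<in> rankings C. \<forall>(x, y) \<in> T. \<pi> r (x, y) \<le> real (u r x {x, y})"
    and budget: "\<forall>r \<in> rankings C. (\<Sum>p \<in> T. \<pi> r p) \<le> N * R r"
    and cap: "\<forall>p \<in> T. (\<Sum>r \<in> rankings C. \<pi> r p) \<le> 1"
    and total: "(\<Sum>r \<in> rankings C. \<Sum>p \<in> T. \<pi> r p) > N - 1"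
    and "T \<in> rankings C"
    using assms(2) unfolding pair_priceable_def N_def by blast
  have unpaid: "\<pi> r p = 0" if "r \<in> Q" and "p \<in> T - P" for r p
  proof -
    obtain x y where p: "p = (x, y)" by fastforce
    have "r \<in> rankings C" and "p \<in> T" and "(x, y) \<notin> r"
      using that Q p by (auto simp: P_def)
    then have "0 \<le> \<pi> r p" and "\<pi> r p \<le> real (u r x {x, y})"
      using nonneg utility p by auto
    then show ?thesis
      using u_pair_eq_0[OF \<open>(x, y) \<notin> r\<close>] by simp
  qed
  have "(\<Sum>r \<in> rankings C. \<Sum>p \<in> T. \<pi> r p)
      \<le> card P + (\<Sum>r \<in> rankings C - Q. \<Sum>p \<in> T. \<pi> r p)"
    using finite_rankings[OF assms(1)] finite_ranking[OF assms(1) \<open>T \<in> rankings C\<close>] Q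
  proof (rule total_payment_le_card_plus_outside)
    show "P \<subseteq> T" by (simp add: P_def)
  qed (use nonneg cap unpaid in auto)
  also have "(\<Sum>r \<in> rankings C - Q. \<Sum>p \<in> T. \<pi> r p) \<le> N * (\<Sum>r \<in> rankings C - Q. R r)"
    unfolding sum_distrib_left using budget by (intro sum_mono) auto
  finally show ?thesis
    using total by (simp add: P_def N_def algebra_simps)
qed

theorem mainTheorem9:
  fixes C :: "'a set" and R :: "'a rel \<Rightarrow> real" and T :: "'a rel"
  assumes "finite C"
    and "ranking_profile C R"
    and "pair_priceable C R T"
  shows "sPJR C R T"
  unfolding sPJR_def
proof (intro allI impI)
  fix S assume sub: "subprofile C S R"
  define N where "N = real (card C choose 2)"
  define Q where "Q = profile_support C S"
  have "N * (1 - (\<Sum>r \<in> rankings C - Q. R r)) - 1 < card (T \<inter> \<Union>Q)"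
    unfolding N_def Q_def using assms(1,3)
    by (rule pair_priceable_card_agreed_pairs_gt) (auto simp: profile_support_def)
  moreover have "N * profile_size C S \<le> N * (1 - (\<Sum>r \<in> rankings C - Q. R r))"
    using mass_outside_support_le[OF assms(1,2) sub] unfolding N_def Q_def
    by (intro mult_left_mono) simp_all
  ultimately have "\<lfloor>profile_size C S * N\<rfloor> \<le> int (card (T \<inter> \<Union>Q))"
    by (simp add: floor_le_iff algebra_simps)
  then show "\<lfloor>profile_size C S * real (card C choose 2)\<rfloor>
      \<le> int (card (T \<inter> \<Union>{r \<in> rankings C. 0 < S r}))"
    unfolding N_def Q_def profile_support_def .
qed

end
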